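(* Let $A$ be a binary $n\times m$ matrix with $R_{binary}(A)=k$ whose binary base graph has at least two (distinct) sources $U_1$ and $U_2$; regard $U_1$ and $U_2$ as $n\times k$ matrices whose columns are the vectors of the respective bases. Let $d$ be a positive integer and let $A''$ be the block matrix with $d$ block rows obtained by appending to $I_d\otimes A$ (the block-diagonal matrix with $d$ copies of $A$ on the diagonal and zeros elsewhere) the matrix $I_d\otimes (U_1\,|\,U_2)$, i.e. $A''=(I_d\otimes A\;|\;I_d\otimes(U_1|U_2))$, where the $i$-th block row contains $A$ in the $i$-th diagonal block of the first part and $(U_1|U_2)$ in the $i$-th block of the second part. Then $R_{binary}(A'')\ge kd+d$.
   Context: $R_{binary}(M)$ for a binary $p\times q$ matrix $M$ is the least $r$ with $M=UV$, $U\in\{0,1\}^{p\times r}$, $V\in\{0,1\}^{r\times q}$, ordinary arithmetic. A set $X$ of $\{0,1\}$-vectors spans a vector $y$ (binary sense) if $y=\sum_{x\in X}c_xx$ with $c_x\in\{0,1\}$ and ordinary addition; it spans a set $Y$ if it spans each vector in $Y$. A binary base of $A$ is a set of $\{0,1\}$ column vectors spanning every column of $A$, of minimum cardinality among such spanning sets. The binary base graph of $A$ is the directed graph whose vertices are the binary bases of $A$, with an edge from base $U$ to a different base $V$ whenever $U$ spans $V$. A source is a vertex with no incoming edges. $(M|N)$ denotes horizontal concatenation and $\otimes$ the Kronecker product. *)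

theory Defs
  imports "Jordan_Normal_Form.Matrix"
begin

text \<open>Binary matrices/vectors: entries in {0,1}, ordinary arithmetic over nat.\<close>

definition binary_mat :: "nat mat \<Rightarrow> bool" where
  "binary_mat M \<longleftrightarrow> (\<forall>i<dim_row M. \<forall>j<dim_col M. M $$ (i,j) \<in> {0,1})"

definition binary_vec :: "nat vec \<Rightarrow> bool" where
  "binary_vec v \<longleftrightarrow> (\<forall>i<dim_vec v. v $ i \<in> {0,1})"

definition R_binary :: "nat mat \<Rightarrow> nat" where
  "R_binary M = (LEAST r. \<exists>U V. U \<in> carrier_mat (dim_row M) r \<and> V \<in> carrier_mat r (dim_col M)
       \<and> binary_mat U \<and> binary_mat V \<and> M = U * V)"

definition bspans :: "nat vec set \<Rightarrow> nat vec \<Rightarrow> bool" where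
  "bspans X y \<longleftrightarrow> (\<exists>c. (\<forall>x\<in>X. c x \<in> {0::nat,1}) \<and>
       (\<forall>i<dim_vec y. y $ i = (\<Sum>x\<in>X. c x * x $ i)))"

definition bspans_set :: "nat vec set \<Rightarrow> nat vec set \<Rightarrow> bool" where
  "bspans_set X Y \<longleftrightarrow> (\<forall>y\<in>Y. bspans X y)"

definition binary_spanning :: "nat mat \<Rightarrow> nat vec set \<Rightarrow> bool" where
  "binary_spanning A X \<longleftrightarrow> finite X \<and> (\<forall>x\<in>X. binary_vec x \<and> dim_vec x = dim_row A)
      \<and> bspans_set X (set (cols A))"

definition binary_base :: "nat mat \<Rightarrow> nat vec set \<Rightarrow> bool" where
  "binary_base A X \<longleftrightarrow> binary_spanning A X \<and> (\<forall>Y. binary_spanning A Y \<longrightarrow> card X \<le> card Y)"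

definition base_graph_edge :: "nat mat \<Rightarrow> nat vec set \<Rightarrow> nat vec set \<Rightarrow> bool" where
  "base_graph_edge A U V \<longleftrightarrow> binary_base A U \<and> binary_base A V \<and> U \<noteq> V \<and> bspans_set U V"

definition base_graph_source :: "nat mat \<Rightarrow> nat vec set \<Rightarrow> bool" where
  "base_graph_source A V \<longleftrightarrow> binary_base A V \<and> \<not> (\<exists>U. base_graph_edge A U V)"

definition hconcat :: "'a mat \<Rightarrow> 'a mat \<Rightarrow> 'a mat" where
  "hconcat M N = mat (dim_row M) (dim_col M + dim_col N)
     (\<lambda>(i,j). if j < dim_col M then M $$ (i,j) else N $$ (i, j - dim_col M))"

definition kron_id :: "nat \<Rightarrow> 'a::zero mat \<Rightarrow> 'a mat" where
  "kron_id d B = mat (d * dim_row B) (d * dim_col B)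
     (\<lambda>(i,j). if i div dim_row B = j div dim_col B
              then B $$ (i mod dim_row B, j mod dim_col B) else 0)"

end

theory Submission
  imports Defs
begin

text \<open>Take an optimal binary factorization \<open>U V\<close> of \<open>A''\<close> and group the nonzero columns of \<open>U\<close>
  by the block row they are supported in. A column of \<open>A''\<close> supported in block row \<open>j\<close> is a 0/1
  combination of columns of \<open>U\<close>, and since all entries are natural numbers only columns supported
  in block row \<open>j\<close> can occur. Their restrictions to block row \<open>j\<close> therefore form a binary spanning
  set of \<open>A\<close> that also spans \<open>U\<^sub>1\<close> and \<open>U\<^sub>2\<close>. Were it of size at most \<open>k\<close>, it would be a base
  spanning both sources and hence equal to each of them; so each of the \<open>d\<close> block rows owns at least
  \<open>k + 1\<close> columns of \<open>U\<close>.\<close>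

lemma index_mult_mat_sum:
  assumes "U \<in> carrier_mat N r" "V \<in> carrier_mat r M" "i < N" "c < M"
  shows "(U * V) $$ (i, c) = (\<Sum>l<r. U $$ (i, l) * V $$ (l, c))"
  using assms by (auto simp: scalar_prod_def lessThan_atLeast0 intro!: sum.cong)

lemma binary_mat_iff_cols: "binary_mat M \<longleftrightarrow> (\<forall>v\<in>set (cols M). binary_vec v)"
proof -
  have "set (cols M) = col M ` {..<dim_col M}" by (auto simp: cols_def)
  then show ?thesis unfolding binary_mat_def binary_vec_def by auto
qed

lemma cols_hconcat:
  assumes "dim_row M = dim_row N"
  shows "cols (hconcat M N) = cols M @ cols N"
  by (rule nth_equalityI) (use assms in \<open>auto simp: hconcat_def nth_append\<close>)

lemma binary_mat_hconcat:
  assumes "binary_mat M" "binary_mat N" "dim_row M = dim_row N"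
  shows "binary_mat (hconcat M N)"
  using assms by (auto simp: binary_mat_iff_cols cols_hconcat)

lemma binary_mat_kron_id:
  assumes "binary_mat B"
  shows "binary_mat (kron_id d B)"
  unfolding binary_mat_def
proof (intro allI impI)
  fix i j assume "i < dim_row (kron_id d B)" "j < dim_col (kron_id d B)"
  then have "i < d * dim_row B" "j < d * dim_col B" by (simp_all add: kron_id_def)
  then have "i mod dim_row B < dim_row B" "j mod dim_col B < dim_col B"
    by (metis mod_less_divisor mult_0_right neq0_conv not_less0)+
  with assms \<open>i < d * dim_row B\<close> \<open>j < d * dim_col B\<close> show "kron_id d B $$ (i, j) \<in> {0, 1}"
    by (simp add: kron_id_def binary_mat_def)
qed

lemma binary_spanning_coeffs:
  assumes "binary_spanning A X"
  obtains cf where "\<And>a x. a < dim_col A \<Longrightarrow> x \<in> X \<Longrightarrow> cf a x \<in> {0::nat, 1}"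
    and "\<And>a i. a < dim_col A \<Longrightarrow> i < dim_row A \<Longrightarrow> A $$ (i, a) = (\<Sum>x\<in>X. cf a x * x $ i)"
proof -
  have "\<forall>a. \<exists>cf. a < dim_col A \<longrightarrow> (\<forall>x\<in>X. cf x \<in> {0::nat, 1})
          \<and> (\<forall>i<dim_row A. A $$ (i, a) = (\<Sum>x\<in>X. cf x * x $ i))"
  proof (intro allI impI)
    fix a
    show "\<exists>cf. a < dim_col A \<longrightarrow> (\<forall>x\<in>X. cf x \<in> {0::nat, 1})
          \<and> (\<forall>i<dim_row A. A $$ (i, a) = (\<Sum>x\<in>X. cf x * x $ i))"
    proof (cases "a < dim_col A")
      case True
      then have "col A a \<in> set (cols A)" by (simp add: cols_def)
      with assms have "bspans X (col A a)" by (simp add: binary_spanning_def bspans_set_def)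
      with True show ?thesis by (auto simp: bspans_def)
    qed simp
  qed
  then show thesis using that by metis
qed

lemma R_binary_le_card:
  assumes "binary_spanning A X"
  shows "R_binary A \<le> card X"
proof -
  obtain cf where cf01: "\<And>a x. a < dim_col A \<Longrightarrow> x \<in> X \<Longrightarrow> cf a x \<in> {0::nat, 1}"
    and cf: "\<And>a i. a < dim_col A \<Longrightarrow> i < dim_row A \<Longrightarrow> A $$ (i, a) = (\<Sum>x\<in>X. cf a x * x $ i)"
    using binary_spanning_coeffs[OF assms] by blast
  obtain xs where xs: "set xs = X" "distinct xs"
    using assms finite_distinct_list unfolding binary_spanning_def by blast
  have card: "card X = length xs" using xs distinct_card by fastforce
  define U where "U = mat_of_cols (dim_row A) xs"
  define V where "V = mat (card X) (dim_col A) (\<lambda>(l, a). cf a (xs ! l))"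
  have bij: "bij_betw ((!) xs) {..<card X} X" by (rule bij_betw_nth) (use xs card in auto)
  have "A = U * V"
  proof (rule eq_matI)
    fix i a assume "i < dim_row (U * V)" "a < dim_col (U * V)"
    then have i: "i < dim_row A" and a: "a < dim_col A" by (simp_all add: U_def V_def)
    have "(U * V) $$ (i, a) = (\<Sum>l<card X. xs ! l $ i * cf a (xs ! l))"
      by (subst index_mult_mat_sum[of _ _ "card X" _ "dim_col A"])
         (use i a card in \<open>simp_all add: U_def V_def mat_of_cols_index\<close>)
    also have "\<dots> = (\<Sum>x\<in>X. cf a x * x $ i)"
      using sum.reindex_bij_betw[OF bij, of "\<lambda>x. cf a x * x $ i"] by (simp add: mult.commute)
    finally show "A $$ (i, a) = (U * V) $$ (i, a)" using cf[OF a i] by simp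
  qed (simp_all add: U_def V_def)
  moreover have "cols U = xs"
    using assms xs unfolding U_def binary_spanning_def by (intro cols_mat_of_cols) (auto intro!: carrier_vecI)
  then have "binary_mat U"
    using assms xs unfolding binary_mat_iff_cols binary_spanning_def by auto
  moreover have "binary_mat V"
    unfolding binary_mat_def V_def using cf01 bij_betwE[OF bij] by simp
  ultimately show ?thesis
    unfolding R_binary_def
    by (intro Least_le exI[of _ U] exI[of _ V]) (simp add: U_def V_def card)
qed

lemma R_binary_factorization:
  assumes "binary_mat M"
  shows "\<exists>U V. U \<in> carrier_mat (dim_row M) (R_binary M) \<and> V \<in> carrier_mat (R_binary M) (dim_col M)
           \<and> binary_mat U \<and> binary_mat V \<and> M = U * V"
  unfolding R_binary_def
proof (rule LeastI_ex)
  have "binary_mat (1\<^sub>m (dim_row M) :: nat mat)" by (auto simp: binary_mat_def)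
  with assms show "\<exists>r U V. U \<in> carrier_mat (dim_row M) r \<and> V \<in> carrier_mat r (dim_col M)
           \<and> binary_mat U \<and> binary_mat V \<and> M = U * V"
    by (intro exI[of _ "dim_row M"] exI[of _ "1\<^sub>m (dim_row M)"] exI[of _ M]) auto
qed

text \<open>A base spanning a source must be that source.\<close>
lemma card_source_less_if_bspans_two_sources:
  assumes "base_graph_source A U1" "base_graph_source A U2" "U1 \<noteq> U2"
    and "binary_spanning A W" "bspans_set W U1" "bspans_set W U2"
  shows "card U1 < card W"
proof (rule ccontr)
  assume "\<not> card U1 < card W"
  with assms have "binary_base A W"
    unfolding base_graph_source_def binary_base_def by (meson le_trans not_less)
  with assms have "W = U1" "W = U2"
    unfolding base_graph_source_def base_graph_edge_def by blast+
  with \<open>U1 \<noteq> U2\<close> show False by simp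
qed

definition col_supported_in_block :: "nat mat \<Rightarrow> nat \<Rightarrow> nat \<Rightarrow> nat \<Rightarrow> bool" where
  "col_supported_in_block M n j c \<longleftrightarrow> (\<forall>i<dim_row M. i div n \<noteq> j \<longrightarrow> M $$ (i, c) = 0)"

definition block_col :: "nat mat \<Rightarrow> nat \<Rightarrow> nat \<Rightarrow> nat \<Rightarrow> nat vec" where
  "block_col M n j c = vec n (\<lambda>t. M $$ (j * n + t, c))"

lemma dim_block_col [simp]: "dim_vec (block_col M n j c) = n"
  by (simp add: block_col_def)

lemma index_block_col [simp]: "t < n \<Longrightarrow> block_col M n j c $ t = M $$ (j * n + t, c)"
  by (simp add: block_col_def)

text \<open>Zero columns are excluded because they are supported in every block.\<close>
definition block_cols :: "nat mat \<Rightarrow> nat \<Rightarrow> nat \<Rightarrow> nat set" where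
  "block_cols M n j = {c. c < dim_col M \<and> col M c \<noteq> 0\<^sub>v (dim_row M) \<and> col_supported_in_block M n j c}"

lemma block_cols_disjoint:
  assumes "j \<noteq> j'"
  shows "block_cols M n j \<inter> block_cols M n j' = {}"
proof -
  have "col M c = 0\<^sub>v (dim_row M)"
    if "col_supported_in_block M n j c" "col_supported_in_block M n j' c" "c < dim_col M" for c
    using that assms unfolding col_supported_in_block_def by (intro eq_vecI) auto
  then show ?thesis unfolding block_cols_def by blast
qed

lemma sum_card_block_cols_le: "(\<Sum>j<d. card (block_cols M n j)) \<le> dim_col M"
proof -
  have "(\<Sum>j<d. card (block_cols M n j)) = card (\<Union>j<d. block_cols M n j)"
  proof (rule card_UN_disjoint[symmetric])
    show "\<forall>j\<in>{..<d}. finite (block_cols M n j)" by (simp add: block_cols_def)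
  qed (simp_all add: block_cols_disjoint)
  also have "\<dots> \<le> card {..<dim_col M}" by (rule card_mono) (auto simp: block_cols_def)
  finally show ?thesis by simp
qed

lemma bspans_image_of_sum:
  assumes "finite L" "X \<subseteq> L" and y: "\<And>t. t < dim_vec y \<Longrightarrow> y $ t = (\<Sum>l\<in>X. f l $ t)"
    and "binary_vec y"
  shows "bspans (f ` L) y"
proof -
  have finX: "finite X" using assms(1,2) by (rule finite_subset[rotated])
  text \<open>Two indices in X with the same image would push the entry of y up to 2.\<close>
  have sum_image: "(\<Sum>w\<in>f ` X. w $ t) = (\<Sum>l\<in>X. f l $ t)" if t: "t < dim_vec y" for t
  proof -
    have le: "(\<Sum>w\<in>f ` X. w $ t) \<le> (\<Sum>l\<in>X. f l $ t)"
      using sum_image_le[OF finX, of "\<lambda>w. w $ t" f] by (simp add: o_def)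
    show ?thesis
    proof (cases "(\<Sum>l\<in>X. f l $ t) = 0")
      case False
      then obtain l where l: "l \<in> X" "f l $ t \<noteq> 0" using finX by (auto simp: sum_eq_0_iff)
      then have "1 \<le> f l $ t" by simp
      also have "\<dots> \<le> (\<Sum>w\<in>f ` X. w $ t)" by (rule member_le_sum) (use l finX in auto)
      finally have "1 \<le> (\<Sum>w\<in>f ` X. w $ t)" .
      moreover have "y $ t \<in> {0, 1}" using t \<open>binary_vec y\<close> by (simp add: binary_vec_def)
      ultimately show ?thesis using le y[OF t] by auto
    qed (use le in simp)
  qed
  define cf where "cf w = (if w \<in> f ` X then 1 else 0 :: nat)" for w
  show ?thesis unfolding bspans_def
  proof (intro exI[of _ cf] conjI ballI allI impI)
    fix t assume t: "t < dim_vec y"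
    have "(\<Sum>w\<in>f ` L. cf w * w $ t) = (\<Sum>w\<in>f ` X. w $ t)"
      by (rule sum.mono_neutral_cong_right) (use assms(1,2) in \<open>auto simp: cf_def\<close>)
    with sum_image[OF t] y[OF t] show "y $ t = (\<Sum>w\<in>f ` L. cf w * w $ t)" by simp
  qed (simp add: cf_def)
qed

text \<open>Entries are natural numbers, so a vanishing entry of \<open>U * V\<close> forces every summand to vanish.\<close>
lemma col_supported_in_block_if_used:
  assumes U: "U \<in> carrier_mat N r" and V: "V \<in> carrier_mat r M" and c: "c < M"
    and supp: "col_supported_in_block (U * V) n j c" and l: "l < r" "V $$ (l, c) \<noteq> 0"
  shows "col_supported_in_block U n j l"
  unfolding col_supported_in_block_def
proof (intro allI impI)
  fix i assume i: "i < dim_row U" "i div n \<noteq> j"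
  then have "(\<Sum>l<r. U $$ (i, l) * V $$ (l, c)) = 0"
    using supp U index_mult_mat_sum[OF U V _ c] unfolding col_supported_in_block_def by auto
  then show "U $$ (i, l) = 0" using l by fastforce
qed

lemma bspans_block_col_mult:
  assumes U: "U \<in> carrier_mat N r" and V: "V \<in> carrier_mat r M" "binary_mat V" and c: "c < M"
    and N: "(j + 1) * n \<le> N" and supp: "col_supported_in_block (U * V) n j c"
    and bin: "binary_vec (block_col (U * V) n j c)"
  shows "bspans (block_col U n j ` block_cols U n j) (block_col (U * V) n j c)"
proof -
  define X where "X = {l \<in> block_cols U n j. V $$ (l, c) = 1}"
  have entry: "block_col (U * V) n j c $ t = (\<Sum>l\<in>X. block_col U n j l $ t)" if t: "t < n" for t
  proof -
    have i: "j * n + t < N" using t N by simp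
    have unused: "U $$ (j * n + t, l) * V $$ (l, c) = 0" if l: "l < r" "l \<notin> X" for l
    proof -
      have "V $$ (l, c) \<in> {0, 1}" using V c l by (auto simp: binary_mat_def)
      moreover have "U $$ (j * n + t, l) = 0" if "V $$ (l, c) = 1"
      proof -
        have "col U l = 0\<^sub>v N"
          using l that col_supported_in_block_if_used[OF U V(1) c supp] U
          by (auto simp: X_def block_cols_def)
        then show ?thesis using i l U by (metis carrier_matD index_col index_zero_vec(1))
      qed
      ultimately show ?thesis by auto
    qed
    have "block_col (U * V) n j c $ t = (\<Sum>l<r. U $$ (j * n + t, l) * V $$ (l, c))"
      using t index_mult_mat_sum[OF U V(1) i c] by simp
    also have "\<dots> = (\<Sum>l\<in>X. U $$ (j * n + t, l))"
      by (rule sum.mono_neutral_cong_right) (use U unused in \<open>auto simp: X_def block_cols_def\<close>)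
    also have "\<dots> = (\<Sum>l\<in>X. block_col U n j l $ t)" using t by simp
    finally show ?thesis .
  qed
  show ?thesis
    by (rule bspans_image_of_sum[where X = X]) (use entry bin in \<open>auto simp: X_def block_cols_def\<close>)
qed

lemma block_index_less:
  fixes a j m d :: nat
  assumes "a < m" "j < d"
  shows "j * m + a < d * m"
proof -
  have "j * m + a < (j + 1) * m" using assms(1) by simp
  also have "\<dots> \<le> d * m" using assms(2) by (intro mult_le_mono1) simp
  finally show ?thesis .
qed

lemma cols_as_block_cols_kron_hconcat:
  assumes A: "A \<in> carrier_mat n m" and P: "P \<in> carrier_mat n q" and j: "j < d"
    and y: "y \<in> set (cols A) \<union> set (cols P)"
  obtains c where "c < d * m + d * q"
    and "col_supported_in_block (hconcat (kron_id d A) (kron_id d P)) n j c"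
    and "y = block_col (hconcat (kron_id d A) (kron_id d P)) n j c"
proof -
  let ?B = "hconcat (kron_id d A) (kron_id d P)"
  have B: "?B $$ (i, c) = (if c < d * m
              then if i div n = c div m then A $$ (i mod n, c mod m) else 0
              else if i div n = (c - d * m) div q then P $$ (i mod n, (c - d * m) mod q) else 0)"
    if "i < d * n" "c < d * m + d * q" for i c
    using that A P by (simp add: hconcat_def kron_id_def)
  have dim_B: "dim_row ?B = d * n" using A by (simp add: hconcat_def kron_id_def)
  have div_mod: "(j * k + t) div k = j" "(j * k + t) mod k = t" if "t < k" for k t :: nat
    using that by (simp_all add: add.commute)
  have row: "j * n + t < d * n" if "t < n" for t using block_index_less[OF that j] .
  consider a where "a < m" "y = col A a" | b where "b < q" "y = col P b"
    using y A P by (auto simp: cols_def)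
  then show ?thesis
  proof cases
    case (1 a)
    have c: "j * m + a < d * m" using block_index_less[OF 1(1) j] .
    show ?thesis
    proof (rule that[of "j * m + a"])
      show "col_supported_in_block ?B n j (j * m + a)"
        unfolding col_supported_in_block_def using B c div_mod[OF 1(1)] dim_B by auto
      show "y = block_col ?B n j (j * m + a)"
        using B c div_mod 1 row A by (intro eq_vecI) auto
    qed (use c in simp)
  next
    case (2 b)
    have c: "j * q + b < d * q" using block_index_less[OF 2(1) j] .
    show ?thesis
    proof (rule that[of "d * m + (j * q + b)"])
      show "col_supported_in_block ?B n j (d * m + (j * q + b))"
        unfolding col_supported_in_block_def using B c div_mod[OF 2(1)] dim_B by auto
      show "y = block_col ?B n j (d * m + (j * q + b))"
        using B c div_mod 2 row P by (intro eq_vecI) auto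
    qed (use c in simp)
  qed
qed

lemma block_cols_of_factorization_spanning:
  assumes A: "A \<in> carrier_mat n m" "binary_mat A" and P: "P \<in> carrier_mat n q" "binary_mat P"
    and U: "U \<in> carrier_mat (d * n) r" "binary_mat U"
    and V: "V \<in> carrier_mat r (d * m + d * q)" "binary_mat V"
    and UV: "hconcat (kron_id d A) (kron_id d P) = U * V" and j: "j < d"
  shows "binary_spanning A (block_col U n j ` block_cols U n j)"
    and "bspans_set (block_col U n j ` block_cols U n j) (set (cols P))"
proof -
  let ?W = "block_col U n j ` block_cols U n j"
  have spans: "bspans ?W y" if y: "y \<in> set (cols A) \<union> set (cols P)" for y
  proof -
    obtain c where c: "c < d * m + d * q" and supp: "col_supported_in_block (U * V) n j c"
      and y_eq: "y = block_col (U * V) n j c"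
      using cols_as_block_cols_kron_hconcat[OF A(1) P(1) j y] unfolding UV .
    have "binary_vec y" using y A(2) P(2) by (auto simp: binary_mat_iff_cols)
    moreover have "(j + 1) * n \<le> d * n" using j by (intro mult_le_mono1) simp
    ultimately show ?thesis
      using bspans_block_col_mult[OF U(1) V c _ supp] y_eq by simp
  qed
  have "binary_vec (block_col U n j l)" if "l \<in> block_cols U n j" for l
  proof -
    have "j * n + t < d * n" if "t < n" for t using block_index_less[OF that j] .
    with that U show ?thesis by (auto simp: binary_vec_def binary_mat_def block_cols_def)
  qed
  then show "binary_spanning A ?W"
    using spans A(1) by (auto simp: binary_spanning_def bspans_set_def block_cols_def)
  show "bspans_set ?W (set (cols P))" using spans by (simp add: bspans_set_def)
qed

lemma R_binary_kron_hconcat_ge: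
  assumes A: "A \<in> carrier_mat n m" "binary_mat A" and P: "P \<in> carrier_mat n q" "binary_mat P"
    and spanning_large: "\<And>W. binary_spanning A W \<Longrightarrow> bspans_set W (set (cols P)) \<Longrightarrow> s < card W"
  shows "(s + 1) * d \<le> R_binary (hconcat (kron_id d A) (kron_id d P))"
proof -
  define B where "B = hconcat (kron_id d A) (kron_id d P)"
  have "binary_mat B"
    unfolding B_def
    by (intro binary_mat_hconcat binary_mat_kron_id) (use A P in \<open>auto simp: kron_id_def\<close>)
  moreover have "B \<in> carrier_mat (d * n) (d * m + d * q)"
    using A P by (simp add: B_def hconcat_def kron_id_def)
  ultimately obtain U V where U: "U \<in> carrier_mat (d * n) (R_binary B)" "binary_mat U"
    and V: "V \<in> carrier_mat (R_binary B) (d * m + d * q)" "binary_mat V" and UV: "B = U * V"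
    using R_binary_factorization by (metis carrier_matD)
  have block_size: "s < card (block_cols U n j)" if j: "j < d" for j
  proof -
    note spanning = block_cols_of_factorization_spanning[OF A P U V UV[unfolded B_def] j]
    have "s < card (block_col U n j ` block_cols U n j)" by (rule spanning_large[OF spanning])
    also have "\<dots> \<le> card (block_cols U n j)" by (rule card_image_le) (simp add: block_cols_def)
    finally show ?thesis .
  qed
  have "(s + 1) * d = (\<Sum>j<d. s + 1)" by simp
  also have "\<dots> \<le> (\<Sum>j<d. card (block_cols U n j))"
    using block_size by (intro sum_mono) (simp add: Suc_le_eq)
  also have "\<dots> \<le> R_binary B" using sum_card_block_cols_le[where M = U] U(1) by simp
  finally show ?thesis by (simp add: B_def)
qed

theorem mainTheorem14:
  fixes A U1m U2m :: "nat mat" and U1 U2 :: "nat vec set" and n m k d :: nat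
  assumes "A \<in> carrier_mat n m" and "binary_mat A"
    and "R_binary A = k"
    and "base_graph_source A U1" and "base_graph_source A U2" and "U1 \<noteq> U2"
    and "U1m \<in> carrier_mat n (card U1)" and "set (cols U1m) = U1"
    and "U2m \<in> carrier_mat n (card U2)" and "set (cols U2m) = U2"
    and "d > 0"
  shows "R_binary (hconcat (kron_id d A) (kron_id d (hconcat U1m U2m))) \<ge> k * d + d"
proof -
  note sources = assms(4-6)
  define P where "P = hconcat U1m U2m"
  have bases: "binary_base A U1" "binary_base A U2"
    using sources by (simp_all add: base_graph_source_def)
  have cols_P: "set (cols P) = U1 \<union> U2"
    using assms(7-10) by (simp add: P_def cols_hconcat)
  have P: "P \<in> carrier_mat n (card U1 + card U2)" "binary_mat P"
    using assms(7,9) cols_P bases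
    by (auto simp: P_def hconcat_def binary_mat_iff_cols binary_base_def binary_spanning_def)
  have "k \<le> card U1"
    using R_binary_le_card bases(1) assms(3) by (auto simp: binary_base_def)
  then have "k * d + d \<le> (card U1 + 1) * d" by simp
  also have "\<dots> \<le> R_binary (hconcat (kron_id d A) (kron_id d P))"
    using card_source_less_if_bspans_two_sources[OF sources] cols_P
    by (intro R_binary_kron_hconcat_ge[OF assms(1,2) P]) (simp add: bspans_set_def)
  finally show ?thesis by (simp add: P_def)
qed

end
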